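(* Let $\mathcal{X}$ be a probability distribution over a set of queries, $k \geq 1$, and $\hat q_1,\dots,\hat q_k,\hat c_1,\dots,\hat c_k : \mathcal{X} \to \mathbb{R}$ integrable functions, and assume the set $\Lambda$ is finite. Let $0 \leq \lambda_1 < \lambda_2$ and let $s^{(1)} \in S_{\lambda_1}$, $s^{(2)} \in S_{\lambda_2}$ have costs $B_1 = C(s^{(1)})$ and $B_2 = C(s^{(2)})$ respectively. Then for every $B \in [B_2, B_1]$ there exists $\lambda \in [\lambda_1,\lambda_2]$ such that $S_\lambda$ contains a routing strategy $s$ with $C(s) = B$.
   Context: A routing strategy is a measurable function $s : \mathcal{X} \to \mathbb{R}^k$ with $s_i(x) \geq 0$ for all $i$ and $\sum_{i=1}^k s_i(x) = 1$ for all $x$; its cost is $C(s) = \mathbb{E}_{x \sim \mathcal{X}}\left[\sum_{i=1}^k s_i(x)\hat c_i(x)\right]$. For $\lambda \in \mathbb{R}^+$, $S_\lambda$ is the set of routing strategies $s$ such that for all $x \in \mathcal{X}$ and $i \in \{1,\dots,k\}$: if $\hat q_i(x) - \lambda \hat c_i(x) < \max_j(\hat q_j(x) - \lambda \hat c_j(x))$ then $s_i(x) = 0$. $\Lambda$ is the set of $\lambda \in \mathbb{R}$ for which there exist $x \in \mathcal{X}$ and $i \neq j$ with $\hat q_i(x) - \lambda \hat c_i(x) = \hat q_j(x) - \lambda \hat c_j(x)$. *)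

theory Defs
  imports "HOL-Probability.Probability"
begin

text \<open>Models are indexed by 1..k. A routing strategy is a function s :: 'x => nat => real,
  where s x i is the weight of model i on query x.\<close>

definition routing_strategy :: "'x measure \<Rightarrow> nat \<Rightarrow> ('x \<Rightarrow> nat \<Rightarrow> real) \<Rightarrow> bool" where
  "routing_strategy M k s \<longleftrightarrow>
     (\<forall>i\<in>{1..k}. (\<lambda>x. s x i) \<in> borel_measurable M) \<and>
     (\<forall>x\<in>space M. (\<forall>i\<in>{1..k}. 0 \<le> s x i) \<and> (\<Sum>i=1..k. s x i) = 1)"

definition cost :: "'x measure \<Rightarrow> nat \<Rightarrow> (nat \<Rightarrow> 'x \<Rightarrow> real) \<Rightarrow> ('x \<Rightarrow> nat \<Rightarrow> real) \<Rightarrow> real" where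
  "cost M k c s = (\<integral>x. (\<Sum>i=1..k. s x i * c i x) \<partial>M)"

definition S_lam :: "'x measure \<Rightarrow> nat \<Rightarrow> (nat \<Rightarrow> 'x \<Rightarrow> real) \<Rightarrow> (nat \<Rightarrow> 'x \<Rightarrow> real)
    \<Rightarrow> real \<Rightarrow> ('x \<Rightarrow> nat \<Rightarrow> real) set" where
  "S_lam M k q c lam = {s. routing_strategy M k s \<and>
     (\<forall>x\<in>space M. \<forall>i\<in>{1..k}.
        q i x - lam * c i x < (MAX j\<in>{1..k}. q j x - lam * c j x) \<longrightarrow> s x i = 0)}"

definition Lam :: "'x measure \<Rightarrow> nat \<Rightarrow> (nat \<Rightarrow> 'x \<Rightarrow> real) \<Rightarrow> (nat \<Rightarrow> 'x \<Rightarrow> real) \<Rightarrow> real set" where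
  "Lam M k q c = {lam. \<exists>x\<in>space M. \<exists>i\<in>{1..k}. \<exists>j\<in>{1..k}. i \<noteq> j \<and>
     q i x - lam * c i x = q j x - lam * c j x}"

end

theory Submission
  imports Defs
begin

(* For fixed lam the set S_lam is convex and the cost is affine along convex combinations, so
   the costs attained in S_lam form an interval. Between two consecutive points of the finite set
   Lam no two scores q_i - lam c_i cross, so a strategy that is optimal at an interior point stays
   optimal on the whole closed gap; hence the cost intervals at consecutive points overlap, and
   walking along this chain of overlapping intervals from l1 to l2 reaches every B between
   B2 and B1. *)

lemma routing_strategy_weight_bounds:
  assumes "routing_strategy M k s" "x \<in> space M" "i \<in> {1..k}"
  shows "0 \<le> s x i" "s x i \<le> 1"
proof -
  have nonneg: "\<forall>j\<in>{1..k}. 0 \<le> s x j" and sum_one: "(\<Sum>j=1..k. s x j) = 1"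
    using assms(1,2) unfolding routing_strategy_def by auto
  show "0 \<le> s x i" using nonneg assms(3) by auto
  have "s x i \<le> (\<Sum>j=1..k. s x j)"
    by (rule member_le_sum) (use nonneg assms(3) in auto)
  then show "s x i \<le> 1" using sum_one by simp
qed

lemma integrable_routing_cost:
  assumes "routing_strategy M k s" "\<forall>i\<in>{1..k}. integrable M (c i)"
  shows "integrable M (\<lambda>x. \<Sum>i=1..k. s x i * c i x)"
proof (rule Bochner_Integration.integrable_sum)
  fix i assume i: "i \<in> {1..k}"
  have "(\<lambda>x. s x i) \<in> borel_measurable M" "c i \<in> borel_measurable M"
    using assms i unfolding routing_strategy_def by auto
  moreover have "AE x in M. norm (s x i * c i x) \<le> norm (c i x)"
    using routing_strategy_weight_bounds[OF assms(1) _ i]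
    by (intro AE_I2) (simp add: abs_mult mult_left_le_one_le)
  ultimately show "integrable M (\<lambda>x. s x i * c i x)"
    using assms(2) i by (auto intro: Bochner_Integration.integrable_bound[where f = "c i"])
qed

lemma routing_strategy_convex_combination:
  assumes "routing_strategy M k s" "routing_strategy M k t" "0 \<le> u" "0 \<le> v" "u + v = 1"
  shows "routing_strategy M k (\<lambda>x i. u * s x i + v * t x i)"
  unfolding routing_strategy_def
proof (intro conjI ballI)
  fix i assume "i \<in> {1..k}"
  then have "(\<lambda>x. s x i) \<in> borel_measurable M" "(\<lambda>x. t x i) \<in> borel_measurable M"
    using assms(1,2) unfolding routing_strategy_def by auto
  then show "(\<lambda>x. u * s x i + v * t x i) \<in> borel_measurable M" by measurable
next
  fix x i assume "x \<in> space M" "i \<in> {1..k}"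
  then show "0 \<le> u * s x i + v * t x i"
    using routing_strategy_weight_bounds[OF assms(1)] routing_strategy_weight_bounds[OF assms(2)]
      assms(3,4) by simp
next
  fix x assume "x \<in> space M"
  then have "(\<Sum>i=1..k. s x i) = 1" "(\<Sum>i=1..k. t x i) = 1"
    using assms(1,2) unfolding routing_strategy_def by auto
  then show "(\<Sum>i=1..k. u * s x i + v * t x i) = 1"
    using assms(5) by (simp add: sum.distrib flip: sum_distrib_left)
qed

lemma S_lam_convex_combination:
  assumes "s \<in> S_lam M k q c lam" "t \<in> S_lam M k q c lam" "0 \<le> u" "0 \<le> v" "u + v = 1"
  shows "(\<lambda>x i. u * s x i + v * t x i) \<in> S_lam M k q c lam"
  using assms routing_strategy_convex_combination[of M k s t u v] unfolding S_lam_def by auto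

lemma cost_convex_combination:
  assumes "routing_strategy M k s" "routing_strategy M k t" "\<forall>i\<in>{1..k}. integrable M (c i)"
  shows "cost M k c (\<lambda>x i. u * s x i + v * t x i) = u * cost M k c s + v * cost M k c t"
proof -
  have "(\<Sum>i=1..k. (u * s x i + v * t x i) * c i x)
      = u * (\<Sum>i=1..k. s x i * c i x) + v * (\<Sum>i=1..k. t x i * c i x)" for x
    by (simp add: sum_distrib_left sum.distrib algebra_simps)
  then show ?thesis
    unfolding cost_def
    using integrable_routing_cost[OF assms(1,3)] integrable_routing_cost[OF assms(2,3)] by simp
qed

lemma convex_cost_image_S_lam:
  assumes "\<forall>i\<in>{1..k}. integrable M (c i)"
  shows "convex (cost M k c ` S_lam M k q c lam)"
proof (rule convexI)
  fix a b u v :: real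
  assume "a \<in> cost M k c ` S_lam M k q c lam" "b \<in> cost M k c ` S_lam M k q c lam"
    and uv: "0 \<le> u" "0 \<le> v" "u + v = 1"
  then obtain s t where st: "s \<in> S_lam M k q c lam" "t \<in> S_lam M k q c lam"
    and "a = cost M k c s" "b = cost M k c t" by auto
  then have "u *\<^sub>R a + v *\<^sub>R b = cost M k c (\<lambda>x i. u * s x i + v * t x i)"
    using cost_convex_combination[of M k s t c u v] assms unfolding S_lam_def by simp
  then show "u *\<^sub>R a + v *\<^sub>R b \<in> cost M k c ` S_lam M k q c lam"
    using S_lam_convex_combination[OF st uv] by blast
qed

lemma measurable_maximizing_index:
  fixes f :: "nat \<Rightarrow> 'x \<Rightarrow> real"
  assumes "k \<ge> 1" "\<And>i. i \<in> {1..k} \<Longrightarrow> f i \<in> borel_measurable M"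
  obtains p where "p \<in> measurable M (count_space UNIV)" "\<And>x. p x \<in> {1..k}"
    "\<And>x. f (p x) x = (MAX j\<in>{1..k}. f j x)"
proof
  define F where "F x = (MAX j\<in>{1..k}. f j x)" for x
  define p where "p x = (LEAST i. i \<in> {1..k} \<and> f i x = F x)" for x
  have F_meas: "F \<in> borel_measurable M"
    unfolding F_def using assms(2) by (intro borel_measurable_Max) auto
  have "\<exists>i\<in>{1..k}. f i x = F x" for x
    using Max_in[of "(\<lambda>j. f j x) ` {1..k}"] assms(1) unfolding F_def by fastforce
  then have p: "p x \<in> {1..k} \<and> f (p x) x = F x" for x
    unfolding p_def by (metis (mono_tags, lifting) LeastI)
  then show "\<And>x. p x \<in> {1..k}" "\<And>x. f (p x) x = (MAX j\<in>{1..k}. f j x)"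
    unfolding F_def by auto
  have "Measurable.pred M (\<lambda>x. i \<in> {1..k} \<and> f i x = F x)" for i
    using assms(2)[of i] F_meas by (cases "i \<in> {1..k}") auto
  then show "p \<in> measurable M (count_space UNIV)"
    unfolding p_def by (rule measurable_Least)
qed

lemma S_lam_nonempty:
  assumes "k \<ge> 1" "\<forall>i\<in>{1..k}. q i \<in> borel_measurable M" "\<forall>i\<in>{1..k}. c i \<in> borel_measurable M"
  shows "S_lam M k q c lam \<noteq> {}"
proof -
  have "(\<lambda>x. q i x - lam * c i x) \<in> borel_measurable M" if "i \<in> {1..k}" for i
    using assms(2,3) that by (intro borel_measurable_diff borel_measurable_times) auto
  then obtain p where p_meas: "p \<in> measurable M (count_space UNIV)" and p: "\<And>x. p x \<in> {1..k}"
    and p_max: "\<And>x. q (p x) x - lam * c (p x) x = (MAX j\<in>{1..k}. q j x - lam * c j x)"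
    using measurable_maximizing_index[OF assms(1), of "\<lambda>i x. q i x - lam * c i x"] by blast
  define s where "s x i = (if i = p x then 1 else 0 :: real)" for x i
  have "routing_strategy M k s"
    unfolding routing_strategy_def s_def using p_meas p by (auto simp: sum.delta)
  moreover have "s x i = 0"
    if "q i x - lam * c i x < (MAX j\<in>{1..k}. q j x - lam * c j x)" for x i
    using that p_max[of x] unfolding s_def by auto
  ultimately have "s \<in> S_lam M k q c lam"
    unfolding S_lam_def by blast
  then show ?thesis by blast
qed

lemma affine_sign_change_root:
  fixes a b l m :: real
  assumes "a - l * b > 0" "a - m * b \<le> 0"
  shows "\<exists>v\<in>{min l m..max l m}. v \<noteq> l \<and> a = v * b"
proof -
  have "b \<noteq> 0" using assms by auto
  then have "(l < a / b \<and> a / b \<le> m) \<or> (m \<le> a / b \<and> a / b < l)"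
    using assms by (cases "b > 0") (auto simp: field_simps)
  then show ?thesis using \<open>b \<noteq> 0\<close> by (intro bexI[of _ "a / b"]) auto
qed

(* A model carrying weight at mu is a maximiser there; if another model beat it at l, their
   scores would tie somewhere in the closed segment from l to mu, but not at l itself. *)
lemma S_lam_subset_of_no_breakpoint:
  assumes "k \<ge> 1" "Lam M k q c \<inter> {min l mu..max l mu} \<subseteq> {l}"
  shows "S_lam M k q c mu \<subseteq> S_lam M k q c l"
proof
  fix s assume s: "s \<in> S_lam M k q c mu"
  have "s x i = 0"
    if x: "x \<in> space M" and i: "i \<in> {1..k}"
      and lt: "q i x - l * c i x < (MAX j\<in>{1..k}. q j x - l * c j x)" for x i
  proof (rule ccontr)
    assume "s x i \<noteq> 0"
    then have i_max: "\<not> q i x - mu * c i x < (MAX j\<in>{1..k}. q j x - mu * c j x)"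
      using s x i unfolding S_lam_def by auto
    obtain j where j: "j \<in> {1..k}" "q j x - l * c j x = (MAX j\<in>{1..k}. q j x - l * c j x)"
      using Max_in[of "(\<lambda>j. q j x - l * c j x) ` {1..k}"] assms(1) by fastforce
    have "q j x - mu * c j x \<le> (MAX j\<in>{1..k}. q j x - mu * c j x)"
      using j(1) by (intro Max_ge) auto
    then obtain v where v: "v \<in> {min l mu..max l mu}" "v \<noteq> l"
      and tie: "q j x - q i x = v * (c j x - c i x)"
      using affine_sign_change_root[of "q j x - q i x" l "c j x - c i x" mu] lt j(2) i_max
      by (auto simp: algebra_simps)
    have "i \<noteq> j" using lt j(2) by auto
    moreover have "q i x - v * c i x = q j x - v * c j x" using tie by (simp add: algebra_simps)
    ultimately have "v \<in> Lam M k q c" unfolding Lam_def using x i j(1) by blast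
    then show False using assms(2) v by auto
  qed
  then show "s \<in> S_lam M k q c l" using s unfolding S_lam_def by auto
qed

lemma S_lam_common_strategy:
  assumes "k \<ge> 1" "\<forall>i\<in>{1..k}. q i \<in> borel_measurable M" "\<forall>i\<in>{1..k}. c i \<in> borel_measurable M"
    and "l < m" "Lam M k q c \<inter> {l<..<m} = {}"
  shows "S_lam M k q c l \<inter> S_lam M k q c m \<noteq> {}"
proof -
  define mu where "mu = (l + m) / 2"
  have "S_lam M k q c mu \<subseteq> S_lam M k q c l" "S_lam M k q c mu \<subseteq> S_lam M k q c m"
    using assms(4,5) unfolding mu_def
    by (intro S_lam_subset_of_no_breakpoint[OF assms(1)]; force)+
  then show ?thesis using S_lam_nonempty[OF assms(1-3)] by blast
qed

lemma closed_segment_split_real: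
  fixes a b g x :: real
  assumes "x \<in> closed_segment a b"
  shows "x \<in> closed_segment a g \<or> x \<in> closed_segment g b"
  using assms by (auto simp: closed_segment_eq_real_ivl split: if_splits)

lemma intermediate_value_overlapping_intervals:
  fixes A :: "real \<Rightarrow> real set"
  assumes "finite L"
    and nonempty: "\<And>p. p \<in> L \<Longrightarrow> A p \<noteq> {}"
    and convex: "\<And>l. convex (A l)"
    and overlap: "\<And>l m. l < m \<Longrightarrow> L \<inter> {l<..<m} = {} \<Longrightarrow> A l \<inter> A m \<noteq> {}"
    and "l1 < l2" "a1 \<in> A l1" "a2 \<in> A l2" "B \<in> closed_segment a1 a2"
  shows "\<exists>lam\<in>{l1..l2}. B \<in> A lam"
  using assms(5-)
proof (induction "card (L \<inter> {l1<..<l2})" arbitrary: l1 l2 a1 a2 rule: less_induct)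
  case less
  show ?case
  proof (cases "L \<inter> {l1<..<l2} = {}")
    case True
    then obtain g where "g \<in> A l1" "g \<in> A l2" using overlap[OF less.prems(1)] by blast
    then have "B \<in> A l1 \<or> B \<in> A l2"
      using closed_segment_split_real[OF less.prems(4), of g] less.prems(2,3)
        closed_segment_subset[OF _ _ convex] by blast
    then show ?thesis using less.prems(1) by auto
  next
    case False
    then obtain p where p: "p \<in> L" "l1 < p" "p < l2" by auto
    then obtain g where g: "g \<in> A p" using nonempty by blast
    have "card (L \<inter> {l1<..<p}) < card (L \<inter> {l1<..<l2})"
      "card (L \<inter> {p<..<l2}) < card (L \<inter> {l1<..<l2})"
      using p \<open>finite L\<close> by (auto intro!: psubset_card_mono)
    then show ?thesis
      using closed_segment_split_real[OF less.prems(4), of g] p g less.prems(2,3)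
        less.hyps[of l1 p a1 g] less.hyps[of p l2 g a2] by force
  qed
qed

theorem lemma5:
  fixes M :: "'x measure" and k :: nat and q c :: "nat \<Rightarrow> 'x \<Rightarrow> real"
    and l1 l2 B :: real and s1 s2 :: "'x \<Rightarrow> nat \<Rightarrow> real"
  assumes "prob_space M"
    and "k \<ge> 1"
    and "\<forall>i\<in>{1..k}. integrable M (q i)"
    and "\<forall>i\<in>{1..k}. integrable M (c i)"
    and "finite (Lam M k q c)"
    and "0 \<le> l1" and "l1 < l2"
    and "s1 \<in> S_lam M k q c l1" and "s2 \<in> S_lam M k q c l2"
    and "B \<in> {cost M k c s2 .. cost M k c s1}"
  shows "\<exists>lam\<in>{l1..l2}. \<exists>s\<in>S_lam M k q c lam. cost M k c s = B"
proof -
  have meas: "\<forall>i\<in>{1..k}. q i \<in> borel_measurable M" "\<forall>i\<in>{1..k}. c i \<in> borel_measurable M"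
    using assms(3,4) by auto
  have costs: "cost M k c s1 \<in> cost M k c ` S_lam M k q c l1"
      "cost M k c s2 \<in> cost M k c ` S_lam M k q c l2"
    using assms(8,9) by blast+
  have "\<exists>lam\<in>{l1..l2}. B \<in> cost M k c ` S_lam M k q c lam"
  proof (rule intermediate_value_overlapping_intervals[OF assms(5) _ _ _ assms(7) costs])
    show "cost M k c ` S_lam M k q c p \<noteq> {}" for p
      using S_lam_nonempty[OF assms(2) meas] by blast
    show "convex (cost M k c ` S_lam M k q c l)" for l
      using convex_cost_image_S_lam[OF assms(4)] .
    show "cost M k c ` S_lam M k q c l \<inter> cost M k c ` S_lam M k q c m \<noteq> {}"
      if "l < m" "Lam M k q c \<inter> {l<..<m} = {}" for l m
      using S_lam_common_strategy[OF assms(2) meas that] by blast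
    show "B \<in> closed_segment (cost M k c s1) (cost M k c s2)"
      using assms(10) by (auto simp: closed_segment_eq_real_ivl)
  qed
  then show ?thesis by blast
qed

end
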